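(* Let $A$ and $B$ be $2\times 2$ matrices with strictly positive entries. Then \[ R(AB)\le \Phi\bigl(R(A),R(B)\bigr)=\left(\frac{1+\sqrt{R(A)R(B)}}{\sqrt{R(A)}+\sqrt{R(B)}}\right)^{2}. \]
   Context: For a $2\times2$ matrix $A=(a_{ij})$ with strictly positive entries, the oriented distortion is $F(A)=\frac{a_{11}a_{22}}{a_{12}a_{21}}$ and the distortion is $R(A)=\max\{F(A),1/F(A)\}$ (so $R(A)\ge 1$). The envelope function is $\Phi(\alpha,\beta)=\left(\frac{1+\sqrt{\alpha\beta}}{\sqrt{\alpha}+\sqrt{\beta}}\right)^2$ for $\alpha,\beta\ge 1$. *)

theory Defs
  imports "HOL-Analysis.Analysis"
begin

definition pos_matrix :: "real^2^2 \<Rightarrow> bool" where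
  "pos_matrix A \<longleftrightarrow> (\<forall>i j. A $ i $ j > 0)"

definition oriented_distortion :: "real^2^2 \<Rightarrow> real" where
  "oriented_distortion A = (A $ 1 $ 1 * A $ 2 $ 2) / (A $ 1 $ 2 * A $ 2 $ 1)"

definition distortion :: "real^2^2 \<Rightarrow> real" where
  "distortion A = max (oriented_distortion A) (1 / oriented_distortion A)"

definition envelope :: "real \<Rightarrow> real \<Rightarrow> real" where
  "envelope \<alpha> \<beta> = ((1 + sqrt (\<alpha> * \<beta>)) / (sqrt \<alpha> + sqrt \<beta>))\<^sup>2"

end

theory Submission
  imports Defs
begin

(* With x = F(A), y = F(B) and t = a12 b21 / (a11 b11) > 0 one computes
   F(AB) = (1 + t)(1 + x y t) / ((1 + y t)(1 + x t)).
   Swapping the rows of A, or the columns of B, inverts x, or y, together with F(AB) and keeps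
   t positive, so it suffices to treat x, y >= 1. There 1 <= F(AB), and F(AB) <= Phi(x, y)
   because, writing x = a^2 and y = b^2, the two cross-multiplied sides differ by
   (a^2 - 1)(b^2 - 1)(1 - a b t)^2 >= 0. *)

definition oriented_distortion_mult :: "real \<Rightarrow> real \<Rightarrow> real \<Rightarrow> real" where
  "oriented_distortion_mult x y t = (1 + t) * (1 + x * y * t) / ((1 + y * t) * (1 + x * t))"

lemma oriented_distortion_mult_entries:
  fixes a b c d p q r s :: real
  assumes "0 < a" "0 < b" "0 < c" "0 < d" "0 < p" "0 < q" "0 < r" "0 < s"
  shows "(a * p + b * r) * (c * q + d * s) / ((a * q + b * s) * (c * p + d * r)) =
    oriented_distortion_mult (a * d / (b * c)) (p * s / (q * r)) (b * r / (a * p))"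
proof -
  let ?t = "b * r / (a * p)"
  have num_den: "1 + ?t = (a * p + b * r) / (a * p)"
    "1 + a * d / (b * c) * (p * s / (q * r)) * ?t = (c * q + d * s) / (c * q)"
    "1 + p * s / (q * r) * ?t = (a * q + b * s) / (a * q)"
    "1 + a * d / (b * c) * ?t = (c * p + d * r) / (c * p)"
    using assms by (simp_all add: field_simps)
  have cancel: "N1 / (a * p) * (N2 / (c * q)) / (N3 / (a * q) * (N4 / (c * p))) = N1 * N2 / (N3 * N4)"
    if "0 < N3" "0 < N4" for N1 N2 N3 N4 :: real
    using assms that by (simp add: field_simps)
  have "0 < a * q + b * s" "0 < c * p + d * r"
    using assms by (simp_all add: add_pos_pos)
  then show ?thesis
    unfolding oriented_distortion_mult_def num_den by (rule cancel[symmetric])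
qed

lemma oriented_distortion_matrix_mult:
  fixes A B :: "real^2^2"
  assumes "pos_matrix A" and "pos_matrix B"
  shows "oriented_distortion (A ** B) =
    oriented_distortion_mult (oriented_distortion A) (oriented_distortion B)
      (A$1$2 * B$2$1 / (A$1$1 * B$1$1))"
  using assms oriented_distortion_mult_entries[of "A$1$1" "A$1$2" "A$2$1" "A$2$2"
      "B$1$1" "B$1$2" "B$2$1" "B$2$2"]
  unfolding pos_matrix_def oriented_distortion_def matrix_matrix_mult_def
  by (simp add: sum_2)

lemma oriented_distortion_mult_ge_one:
  fixes x y t :: real
  assumes "1 \<le> x" "1 \<le> y" "0 < t"
  shows "1 \<le> oriented_distortion_mult x y t"
proof -
  have "(1 + t) * (1 + x * y * t) - (1 + y * t) * (1 + x * t) = t * (x - 1) * (y - 1)"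
    by (simp add: algebra_simps)
  moreover have "0 \<le> t * (x - 1) * (y - 1)"
    using assms by simp
  moreover have "0 < (1 + y * t) * (1 + x * t)"
    using assms by (simp add: add_pos_pos)
  ultimately show ?thesis
    unfolding oriented_distortion_mult_def by simp
qed

lemma envelope_squares:
  fixes a b :: real
  assumes "0 \<le> a" "0 \<le> b"
  shows "envelope (a\<^sup>2) (b\<^sup>2) = (1 + a * b)\<^sup>2 / (a + b)\<^sup>2"
  using assms by (simp add: envelope_def real_sqrt_mult power_divide)

lemma oriented_distortion_mult_le_envelope:
  fixes x y t :: real
  assumes "1 \<le> x" "1 \<le> y" "0 < t"
  shows "oriented_distortion_mult x y t \<le> envelope x y"
proof -
  obtain a b where a: "1 \<le> a" "x = a\<^sup>2" and b: "1 \<le> b" "y = b\<^sup>2"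
    using assms by (metis real_sqrt_ge_one real_sqrt_pow2 order.trans zero_le_one)
  have "(1 + a * b)\<^sup>2 * ((1 + b\<^sup>2 * t) * (1 + a\<^sup>2 * t)) - (a + b)\<^sup>2 * ((1 + t) * (1 + a\<^sup>2 * b\<^sup>2 * t))
        = (a\<^sup>2 - 1) * (b\<^sup>2 - 1) * (1 - a * b * t)\<^sup>2"
    by (simp add: algebra_simps power2_eq_square)
  moreover have "0 \<le> (a\<^sup>2 - 1) * (b\<^sup>2 - 1) * (1 - a * b * t)\<^sup>2"
    using a b by (simp add: one_le_power)
  moreover have "0 < (1 + b\<^sup>2 * t) * (1 + a\<^sup>2 * t)" "0 < (a + b)\<^sup>2"
    using a b assms(3) by (simp_all add: add_pos_pos)
  ultimately have "(1 + t) * (1 + a\<^sup>2 * b\<^sup>2 * t) / ((1 + b\<^sup>2 * t) * (1 + a\<^sup>2 * t))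
      \<le> (1 + a * b)\<^sup>2 / (a + b)\<^sup>2"
    by (simp add: divide_simps mult.commute mult.left_commute)
  then show ?thesis
    using a b envelope_squares[of a b]
    unfolding oriented_distortion_mult_def by (simp add: power_mult_distrib)
qed

lemma max_inverse_eq_self:
  fixes x :: real
  assumes "1 \<le> x"
  shows "max x (1 / x) = x"
  using assms order.trans[of "1 / x" 1 x] by (simp add: max_def)

lemma max_inverse_eq_inverse:
  fixes x :: real
  assumes "0 < x" "x < 1"
  shows "max x (1 / x) = 1 / x"
  using assms mult_le_one[of x x] by (simp add: max_def divide_simps)

lemma one_le_max_inverse:
  fixes x :: real
  assumes "0 < x"
  shows "1 \<le> max x (1 / x)"
  using assms by (cases "1 \<le> x") (simp_all add: max_inverse_eq_self max_inverse_eq_inverse)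

lemma oriented_distortion_mult_normalize:
  fixes x y t :: real
  assumes "0 < x" "0 < y" "0 < t"
  obtains s where "0 < s"
    "oriented_distortion_mult (max x (1 / x)) (max y (1 / y)) s
       \<in> {oriented_distortion_mult x y t, 1 / oriented_distortion_mult x y t}"
proof -
  consider "1 \<le> x" "1 \<le> y" | "1 \<le> x" "y < 1" | "x < 1" "1 \<le> y" | "x < 1" "y < 1"
    by linarith
  then show ?thesis
  proof cases
    case 1
    then show ?thesis
      using that assms by (simp add: max_inverse_eq_self)
  next
    case 2
    have "oriented_distortion_mult x (1 / y) (t * y) = 1 / oriented_distortion_mult x y t"
      using assms unfolding oriented_distortion_mult_def by (simp add: field_simps)
    then show ?thesis
      using 2 that[of "t * y"] assms by (simp add: max_inverse_eq_self max_inverse_eq_inverse)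
  next
    case 3
    have "oriented_distortion_mult (1 / x) y (t * x) = 1 / oriented_distortion_mult x y t"
      using assms unfolding oriented_distortion_mult_def by (simp add: field_simps)
    then show ?thesis
      using 3 that[of "t * x"] assms by (simp add: max_inverse_eq_self max_inverse_eq_inverse)
  next
    case 4
    have "oriented_distortion_mult (1 / x) (1 / y) (t * x * y) = oriented_distortion_mult x y t"
      using assms unfolding oriented_distortion_mult_def by (simp add: field_simps)
    then show ?thesis
      using 4 that[of "t * x * y"] assms by (simp add: max_inverse_eq_inverse)
  qed
qed

theorem mainTheorem1:
  fixes A B :: "real^2^2"
  assumes "pos_matrix A" and "pos_matrix B"
  shows "distortion (A ** B) \<le> envelope (distortion A) (distortion B)"
proof -
  let ?t = "A$1$2 * B$2$1 / (A$1$1 * B$1$1)"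
  have pos: "0 < oriented_distortion A" "0 < oriented_distortion B" "0 < ?t"
    using assms unfolding pos_matrix_def oriented_distortion_def by simp_all
  obtain s where "0 < s" and s:
    "oriented_distortion_mult (distortion A) (distortion B) s
       \<in> {oriented_distortion (A ** B), 1 / oriented_distortion (A ** B)}"
    using oriented_distortion_mult_normalize[OF pos]
    unfolding distortion_def oriented_distortion_matrix_mult[OF assms] by blast
  define g where "g = oriented_distortion_mult (distortion A) (distortion B) s"
  have "1 \<le> distortion A" "1 \<le> distortion B"
    using pos unfolding distortion_def by (simp_all add: one_le_max_inverse)
  then have "1 \<le> g" and "g \<le> envelope (distortion A) (distortion B)"
    unfolding g_def using \<open>0 < s\<close>
    by (simp_all add: oriented_distortion_mult_ge_one oriented_distortion_mult_le_envelope)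
  moreover have "g = oriented_distortion (A ** B) \<or> g = 1 / oriented_distortion (A ** B)"
    using s unfolding g_def by simp
  then have "distortion (A ** B) = max g (1 / g)"
    unfolding distortion_def by (auto simp: max.commute)
  ultimately show ?thesis
    by (simp add: max_inverse_eq_self)
qed

end
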